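(* Let $\{a_n\},\{\rho_n\},\{\hat a_n\},\{\hat\rho_n\}$ ($n\ge1$) be sequences of positive numbers such that $\{\rho_n\}$ and $\{\hat\rho_n\}$ are strictly increasing with $\rho_n\to+\infty$, $\hat\rho_n\to+\infty$, and $\sum_{n\ge1}a_n\rho_n^{-2}<\infty$, $\sum_{n\ge1}\hat a_n\hat\rho_n^{-2}<\infty$. Let $\mu\in\mathbb R$, $\sigma\ge 0$ and let $\phi$ be the real meromorphic function \[ \phi(z)=\tfrac12\sigma^2z^2+\mu z+z^2\sum_{n\ge1}\frac{a_n}{\rho_n(\rho_n-z)}+z^2\sum_{n\ge1}\frac{\hat a_n}{\hat\rho_n(\hat\rho_n+z)}, \] (the Laplace exponent $\ln\mathbb E[e^{zX_1}]$ of the Lévy process $X$ with Gaussian coefficient $\sigma$, mean $\mathbb E[X_1]=\mu$ and Lévy density $\pi(x)=\mathbf 1(x>0)\sum_{n}a_n\rho_ne^{-\rho_nx}+\mathbf 1(x<0)\sum_n\hat a_n\hat\rho_ne^{\hat\rho_nx}$). Let $q>0$. Then the equation $\phi(z)=q$ has solutions $\{\zeta_n,-\hat\zeta_n\}_{n\ge1}$, where $\{\zeta_n\}_{n\ge1}$ and $\{\hat\zeta_n\}_{n\ge1}$ are sequences of positive numbers satisfying the interlacing property \[ 0<\zeta_1<\rho_1<\zeta_2<\rho_2<\cdots,\qquad 0<\hat\zeta_1<\hat\rho_1<\hat\zeta_2<\hat\rho_2<\cdots. \]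
   Context: $\mathbf 1(\cdot)$ denotes the indicator function. *)

theory Defs
  imports Complex_Main
begin

text \<open>Sequences indexed by n >= 1 in the paper are represented as functions on nat
  indexed from 0, i.e. a k stands for a_(k+1).\<close>

text \<open>The Laplace exponent phi(z), as a function on the complex plane.
  It is meaningful away from the poles rho_n and -rhohat_n.\<close>

definition laplace_exponent ::
  "real \<Rightarrow> real \<Rightarrow> (nat \<Rightarrow> real) \<Rightarrow> (nat \<Rightarrow> real) \<Rightarrow> (nat \<Rightarrow> real) \<Rightarrow> (nat \<Rightarrow> real)
   \<Rightarrow> complex \<Rightarrow> complex" where
  "laplace_exponent \<sigma> \<mu> a \<rho> ah \<rho>h z =
     complex_of_real (\<sigma>^2 / 2) * z^2 + complex_of_real \<mu> * z
     + z^2 * (\<Sum>n. complex_of_real (a n) / (complex_of_real (\<rho> n) * (complex_of_real (\<rho> n) - z)))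
     + z^2 * (\<Sum>n. complex_of_real (ah n) / (complex_of_real (\<rho>h n) * (complex_of_real (\<rho>h n) + z)))"

definition laplace_poles :: "(nat \<Rightarrow> real) \<Rightarrow> (nat \<Rightarrow> real) \<Rightarrow> complex set" where
  "laplace_poles \<rho> \<rho>h = range (\<lambda>n. complex_of_real (\<rho> n)) \<union> range (\<lambda>n. - complex_of_real (\<rho>h n))"

end

theory Submission
  imports Defs "HOL-Analysis.Uniform_Limit"
begin

text \<open>
  On the real axis the exponent \<open>\<phi>\<close> is real and continuous between its poles. On each gap
  \<open>(0, \<rho>\<^sub>1)\<close>, \<open>(\<rho>\<^sub>n, \<rho>\<^sub>n\<^sub>+\<^sub>1)\<close> it starts below \<open>q\<close> (since \<open>\<phi>(0) = 0\<close>, resp. \<open>\<phi> \<rightarrow> -\<infinity>\<close> to the right of a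
  pole) and tends to \<open>+\<infinity>\<close> at the right end, so it takes the value \<open>q\<close> there. The root is
  unique because \<open>(\<phi>(x) - q)/x\<close> is strictly increasing on a gap: every summand
  \<open>x a\<^sub>k/(\<rho>\<^sub>k(\<rho>\<^sub>k - x))\<close> is nondecreasing as long as \<open>x\<close> does not cross \<open>\<rho>\<^sub>k\<close>, and \<open>-q/x\<close> is
  strictly increasing. The negative roots are the positive roots of \<open>\<phi>(-x)\<close>, which is an
  exponent of the same form with the two sides exchanged. There are no non-real roots: for
  \<open>y = Im z \<noteq> 0\<close> every term of \<open>\<phi>(z)/z\<close> contributes \<open>y Im(\<dots>) \<ge> 0\<close>, whereas
  \<open>y Im(q/z) = -q y\<^sup>2/|z|\<^sup>2 < 0\<close>.
\<close>

lemma IVT_open_interval: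
  fixes f :: "real \<Rightarrow> real"
  assumes "lo < hi" "continuous_on {lo<..<hi} f"
    and "eventually (\<lambda>x. f x < y) (at_right lo)" "eventually (\<lambda>x. y < f x) (at_left hi)"
  shows "\<exists>x. lo < x \<and> x < hi \<and> f x = y"
proof -
  define m where "m = (lo + hi) / 2"
  have "lo < m" "m < hi"
    using assms(1) by (simp_all add: m_def)
  have "eventually (\<lambda>x. f x < y \<and> lo < x \<and> x < m) (at_right lo)"
    using assms(3) eventually_at_right_less order_tendstoD(2)[OF tendsto_ident_at \<open>lo < m\<close>]
    by eventually_elim simp
  then obtain u where u: "f u < y" "lo < u" "u < m"
    using eventually_happens'[OF trivial_limit_at_right_real] by blast
  have "eventually (\<lambda>x. y < f x \<and> m < x \<and> x < hi) (at_left hi)"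
    using assms(4) order_tendstoD(1)[OF tendsto_ident_at \<open>m < hi\<close>]
      eventually_at_left_real[OF \<open>m < hi\<close>]
    by eventually_elim simp
  then obtain v where v: "y < f v" "m < v" "v < hi"
    using eventually_happens'[OF trivial_limit_at_left_real] by blast
  have "continuous_on {u..v} f"
    using u v by (intro continuous_on_subset[OF assms(2)]) auto
  then obtain x where "u \<le> x" "x \<le> v" "f x = y"
    using IVT'[of f u y v] u v by fastforce
  with u v show ?thesis
    by (intro exI[of _ x]) auto
qed

definition pole_series :: "(nat \<Rightarrow> real) \<Rightarrow> (nat \<Rightarrow> real) \<Rightarrow> real \<Rightarrow> real" where
  "pole_series c r x = (\<Sum>k. c k / (r k * (r k - x)))"

lemma norm_pole_term_le:
  fixes z :: "'a::real_normed_field"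
  assumes "0 < r" "2 * norm z \<le> r"
  shows "norm (of_real c / (of_real r * (of_real r - z))) \<le> 2 * \<bar>c\<bar> / r^2"
proof -
  have "r / 2 \<le> norm (of_real r - z)"
    using norm_triangle_ineq2[of "of_real r" z] assms by simp
  have "norm (of_real c / (of_real r * (of_real r - z))) = \<bar>c\<bar> / (r * norm (of_real r - z))"
    using assms(1) by (simp add: norm_divide norm_mult)
  also have "\<dots> \<le> \<bar>c\<bar> / (r * (r / 2))"
  proof (rule divide_left_mono)
    show "r * (r / 2) \<le> r * norm (of_real r - z)"
      using assms(1) \<open>r / 2 \<le> norm (of_real r - z)\<close> by (intro mult_left_mono) auto
    show "0 < r * norm (of_real r - z) * (r * (r / 2))"
      using assms(1) \<open>r / 2 \<le> norm (of_real r - z)\<close> by (intro mult_pos_pos) auto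
  qed simp
  also have "\<dots> = 2 * \<bar>c\<bar> / r^2"
    by (simp add: power2_eq_square)
  finally show ?thesis .
qed

lemma Im_mult_pole_term:
  assumes "0 < r"
  shows "Im (z * (of_real c / (of_real r * (of_real r - z))))
    = c * Im z / ((r - Re z)^2 + (Im z)^2)"
proof -
  have Im_of_real_mult: "Im (of_real t * w) = t * Im w" for t w
    by simp
  have "z * (of_real c / (of_real r * (of_real r - z))) = of_real (c / r) * (z / (of_real r - z))"
    using assms by (simp add: field_simps)
  also have "Im \<dots> = c / r * Im (z / (of_real r - z))"
    by (rule Im_of_real_mult)
  also have "Im (z / (of_real r - z)) = r * Im z / ((r - Re z)^2 + (Im z)^2)"
    by (simp add: Im_divide algebra_simps power2_eq_square)
  finally show ?thesis
    using assms by simp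
qed

lemma mult_pole_term_mono:
  fixes c r x y :: real
  assumes "0 \<le> c" "r \<noteq> 0" "x < y" "0 < (r - x) * (r - y)"
  shows "x * (c / (r * (r - x))) \<le> y * (c / (r * (r - y)))"
proof -
  have "r - x \<noteq> 0" "r - y \<noteq> 0"
    using assms(4) by auto
  then have "x * (c / (r * (r - x))) - y * (c / (r * (r - y))) = c * (x - y) / ((r - x) * (r - y))"
    using assms(2) by (simp add: divide_simps) (simp add: algebra_simps)
  moreover have "c * (x - y) / ((r - x) * (r - y)) \<le> 0"
    using assms by (intro divide_nonpos_pos mult_nonneg_nonpos) auto
  ultimately show ?thesis
    by simp
qed

locale pole_data =
  fixes c r :: "nat \<Rightarrow> real"
  assumes weight_nonneg: "\<And>k. 0 \<le> c k"
    and pole_pos: "\<And>k. 0 < r k"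
    and poles_at_top: "filterlim r at_top sequentially"
    and summable_weights: "summable (\<lambda>k. c k / (r k)^2)"
begin

lemma poles_eventually_ge: "\<exists>N. \<forall>k\<ge>N. R \<le> r k"
  using poles_at_top unfolding filterlim_at_top eventually_sequentially by blast

lemma summable_pole_terms:
  fixes z :: "'a::{real_normed_field,banach}"
  shows "summable (\<lambda>k. of_real (c k) / (of_real (r k) * (of_real (r k) - z)))"
proof (rule summable_comparison_test_ev)
  obtain N where "\<forall>k\<ge>N. 2 * norm z \<le> r k"
    using poles_eventually_ge by blast
  then show "\<forall>\<^sub>F k in sequentially.
      norm (of_real (c k) / (of_real (r k) * (of_real (r k) - z))) \<le> 2 * c k / (r k)^2"
    unfolding eventually_sequentially
    using norm_pole_term_le[OF pole_pos] weight_nonneg by (metis abs_of_nonneg)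
  show "summable (\<lambda>k. 2 * c k / (r k)^2)"
    using summable_mult[OF summable_weights, of 2] by (simp add: mult.assoc)
qed

lemma pole_series_sums: "(\<lambda>k. c k / (r k * (r k - x))) sums pole_series c r x"
  using summable_pole_terms[of x] by (simp add: pole_series_def summable_sums)

lemma pole_data_drop_weights: "pole_data (\<lambda>k. if k \<in> S then 0 else c k) r"
proof
  show "summable (\<lambda>k. (if k \<in> S then 0 else c k) / (r k)^2)"
    by (rule summable_comparison_test[OF _ summable_weights]) (auto simp: weight_nonneg)
qed (use weight_nonneg pole_pos poles_at_top in auto)

lemma pole_series_drop_weights:
  assumes "finite S"
  shows "pole_series c r x
    = pole_series (\<lambda>k. if k \<in> S then 0 else c k) r x + (\<Sum>k\<in>S. c k / (r k * (r k - x)))"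
proof -
  have "(\<lambda>k. c k / (r k * (r k - x)) - (if k \<in> S then c k / (r k * (r k - x)) else 0))
      sums (pole_series c r x - (\<Sum>k\<in>S. c k / (r k * (r k - x))))"
    by (rule sums_diff[OF pole_series_sums sums_If_finite_set[OF assms]])
  moreover have "(\<lambda>k. c k / (r k * (r k - x)) - (if k \<in> S then c k / (r k * (r k - x)) else 0))
      = (\<lambda>k. (if k \<in> S then 0 else c k) / (r k * (r k - x)))"
    by auto
  ultimately have "(\<lambda>k. (if k \<in> S then 0 else c k) / (r k * (r k - x)))
      sums (pole_series c r x - (\<Sum>k\<in>S. c k / (r k * (r k - x))))"
    by simp
  then show ?thesis
    using pole_data.pole_series_sums[OF pole_data_drop_weights, of S x] sums_unique2 by fastforce
qed

lemma continuous_on_pole_series: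
  fixes R :: real
  assumes "\<And>k. c k \<noteq> 0 \<Longrightarrow> 2 * R \<le> r k"
  shows "continuous_on (ball 0 R) (pole_series c r)"
proof -
  have "uniform_limit (ball 0 R) (\<lambda>n x. \<Sum>k<n. c k / (r k * (r k - x))) (pole_series c r) sequentially"
    unfolding pole_series_def[abs_def]
  proof (rule Weierstrass_m_test)
    fix k :: nat and x :: real
    assume "x \<in> ball 0 R"
    show "norm (c k / (r k * (r k - x))) \<le> 2 * c k / (r k)^2"
    proof (cases "c k = 0")
      case False
      then have "2 * norm x \<le> r k"
        using assms[of k] \<open>x \<in> ball 0 R\<close> by simp
      from norm_pole_term_le[OF pole_pos this, of "c k"] show ?thesis
        using weight_nonneg[of k] by simp
    qed simp
  next
    show "summable (\<lambda>k. 2 * c k / (r k)^2)"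
      using summable_mult[OF summable_weights, of 2] by (simp add: mult.assoc)
  qed
  moreover have "continuous_on (ball 0 R) (\<lambda>x. \<Sum>k<n. c k / (r k * (r k - x)))" for n :: nat
  proof (intro continuous_on_sum)
    fix k :: nat
    show "continuous_on (ball 0 R) (\<lambda>x. c k / (r k * (r k - x)))"
    proof (cases "c k = 0")
      case False
      then have "\<forall>x\<in>ball 0 R. x < r k"
        using assms[of k] by (auto simp: abs_less_iff)
      with pole_pos[of k] show ?thesis
        by (intro continuous_intros) auto
    qed simp
  qed
  ultimately show ?thesis
    by (intro uniform_limit_theorem) auto
qed

lemma isCont_pole_series:
  assumes "\<And>k. r k = x \<Longrightarrow> c k = 0"
  shows "isCont (pole_series c r) x"
proof -
  obtain N where N: "\<forall>k\<ge>N. 2 * (\<bar>x\<bar> + 1) \<le> r k"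
    using poles_eventually_ge by blast
  define tail where "tail = (\<lambda>k. if k \<in> {..<N} then 0 else c k)"
  have "continuous_on (ball 0 (\<bar>x\<bar> + 1)) (pole_series tail r)"
    unfolding tail_def using N
    by (intro pole_data.continuous_on_pole_series[OF pole_data_drop_weights])
      (metis lessThan_iff not_le)
  then have "isCont (pole_series tail r) x"
    by (rule continuous_on_interior) (auto simp: interior_open)
  moreover have "isCont (\<lambda>x. c k / (r k * (r k - x))) x" for k
    using assms[of k] pole_pos[of k] by (cases "c k = 0") (auto intro: continuous_intros)
  ultimately have "isCont (\<lambda>x. pole_series tail r x + (\<Sum>k<N. c k / (r k * (r k - x)))) x"
    by (intro isCont_add continuous_sum)
  then show ?thesis
    unfolding tail_def pole_series_drop_weights[OF finite_lessThan, symmetric] .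
qed

lemma Im_mult_pole_series_nonneg:
  "0 \<le> Im z * Im (z * (\<Sum>k. of_real (c k) / (of_real (r k) * (of_real (r k) - z))))"
proof -
  let ?t = "\<lambda>k. z * (of_real (c k) / (of_real (r k) * (of_real (r k) - z)))"
  have "summable ?t"
    by (rule summable_mult[OF summable_pole_terms])
  have "z * (\<Sum>k. of_real (c k) / (of_real (r k) * (of_real (r k) - z))) = (\<Sum>k. ?t k)"
    by (rule suminf_mult[OF summable_pole_terms, symmetric])
  then have "Im z * Im (z * (\<Sum>k. of_real (c k) / (of_real (r k) * (of_real (r k) - z))))
      = (\<Sum>k. Im z * Im (?t k))"
    using Im_suminf[OF \<open>summable ?t\<close>] suminf_mult[OF summable_Im[OF \<open>summable ?t\<close>]] by simp
  also have "\<dots> \<ge> 0"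
  proof (rule suminf_nonneg)
    show "summable (\<lambda>k. Im z * Im (?t k))"
      by (intro summable_mult summable_Im \<open>summable ?t\<close>)
    show "0 \<le> Im z * Im (?t k)" for k
      using weight_nonneg[of k] unfolding Im_mult_pole_term[OF pole_pos]
      by (simp add: mult.left_commute[of "Im z"] zero_le_mult_iff)
  qed
  finally show ?thesis .
qed

lemma pole_series_sub_isolated_pole:
  assumes "\<And>k. r k = r m \<Longrightarrow> k = m"
  obtains g where "isCont g (r m)"
    and "\<And>x. pole_series c r x = g x + c m / r m * inverse (r m - x)"
proof
  let ?g = "pole_series (\<lambda>k. if k \<in> {m} then 0 else c k) r"
  show "isCont ?g (r m)"
    using assms by (intro pole_data.isCont_pole_series[OF pole_data_drop_weights]) auto
  show "pole_series c r x = ?g x + c m / r m * inverse (r m - x)" for x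
    using pole_series_drop_weights[of "{m}" x] by (simp add: field_simps)
qed

end

definition laplace_exponent_real ::
  "real \<Rightarrow> real \<Rightarrow> (nat \<Rightarrow> real) \<Rightarrow> (nat \<Rightarrow> real) \<Rightarrow> (nat \<Rightarrow> real) \<Rightarrow> (nat \<Rightarrow> real)
   \<Rightarrow> real \<Rightarrow> real" where
  "laplace_exponent_real \<sigma> \<mu> a \<rho> ah \<rho>h x =
     \<sigma>^2 / 2 * x^2 + \<mu> * x + x^2 * pole_series a \<rho> x + x^2 * pole_series ah \<rho>h (-x)"

lemma laplace_exponent_real_0 [simp]: "laplace_exponent_real \<sigma> \<mu> a \<rho> ah \<rho>h 0 = 0"
  by (simp add: laplace_exponent_real_def)

lemma laplace_exponent_real_minus:
  "laplace_exponent_real \<sigma> \<mu> a \<rho> ah \<rho>h (-x) = laplace_exponent_real \<sigma> (-\<mu>) ah \<rho>h a \<rho> x"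
  by (simp add: laplace_exponent_real_def)

lemma of_real_in_laplace_poles_iff:
  "complex_of_real x \<in> laplace_poles \<rho> \<rho>h \<longleftrightarrow> x \<in> range \<rho> \<or> -x \<in> range \<rho>h"
proof -
  have "complex_of_real x = - complex_of_real y \<longleftrightarrow> -x = y" for y
    by (metis minus_minus of_real_eq_iff of_real_minus)
  then show ?thesis
    by (auto simp: laplace_poles_def)
qed

locale two_sided_poles = pos: pole_data a \<rho> + neg: pole_data ah \<rho>h
  for a \<rho> ah \<rho>h :: "nat \<Rightarrow> real"
begin

abbreviation \<phi> :: "real \<Rightarrow> real \<Rightarrow> real \<Rightarrow> real" where
  "\<phi> \<sigma> \<mu> \<equiv> laplace_exponent_real \<sigma> \<mu> a \<rho> ah \<rho>h"

lemma two_sided_poles_mirror: "two_sided_poles ah \<rho>h a \<rho>"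
  by (simp add: two_sided_poles_def pos.pole_data_axioms neg.pole_data_axioms)

lemma minus_nonneg_not_neg_pole:
  assumes "0 \<le> x"
  shows "-x \<notin> range \<rho>h"
proof
  assume "-x \<in> range \<rho>h"
  then obtain k where "-x = \<rho>h k"
    by blast
  with assms neg.pole_pos[of k] show False
    by simp
qed

lemma laplace_exponent_of_real:
  "laplace_exponent \<sigma> \<mu> a \<rho> ah \<rho>h (of_real x) = of_real (\<phi> \<sigma> \<mu> x)"
proof -
  have "(\<Sum>k. of_real (c k) / (of_real (r k) * (of_real (r k) - of_real y)))
      = complex_of_real (pole_series c r y)" if "pole_data c r" for c r y
  proof -
    have "(\<lambda>k. complex_of_real (c k / (r k * (r k - y)))) sums complex_of_real (pole_series c r y)"
      unfolding sums_of_real_iff by (rule pole_data.pole_series_sums[OF that])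
    then show ?thesis
      by (simp add: sums_iff)
  qed
  from this[OF pos.pole_data_axioms, of x] this[OF neg.pole_data_axioms, of "-x"] show ?thesis
    by (simp add: laplace_exponent_def laplace_exponent_real_def)
qed

lemma laplace_exponent_eq_pos_imp_real:
  assumes "0 < q" "laplace_exponent \<sigma> \<mu> a \<rho> ah \<rho>h z = of_real q"
  shows "Im z = 0"
proof (rule ccontr)
  assume "Im z \<noteq> 0"
  then have "z \<noteq> 0"
    by auto
  define S where "S = (\<Sum>k. of_real (a k) / (of_real (\<rho> k) * (of_real (\<rho> k) - z)))"
  define Sh where "Sh = (\<Sum>k. of_real (ah k) / (of_real (\<rho>h k) * (of_real (\<rho>h k) - (-z))))"
  have "of_real q / z = of_real (\<sigma>^2 / 2) * z + of_real \<mu> + z * S + z * Sh"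
    using assms(2) \<open>z \<noteq> 0\<close> unfolding laplace_exponent_def S_def Sh_def
    by (simp add: field_simps power2_eq_square)
  then have "Im z * Im (of_real q / z)
      = \<sigma>^2 / 2 * (Im z)^2 + Im z * Im (z * S) + Im (-z) * Im (-z * Sh)"
    by (simp add: algebra_simps power2_eq_square)
  moreover have "0 \<le> Im z * Im (z * S)" "0 \<le> Im (-z) * Im (-z * Sh)"
    unfolding S_def Sh_def
    by (rule pos.Im_mult_pole_series_nonneg neg.Im_mult_pole_series_nonneg)+
  moreover have "Im z * Im (of_real q / z) = - (q * (Im z)^2 / ((Re z)^2 + (Im z)^2))"
    by (simp add: Im_divide power2_eq_square)
  moreover have "0 < q * (Im z)^2 / ((Re z)^2 + (Im z)^2)"
    using assms(1) \<open>Im z \<noteq> 0\<close> by (simp add: add_nonneg_pos)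
  moreover have "0 \<le> \<sigma>^2 / 2 * (Im z)^2"
    by simp
  ultimately show False
    by linarith
qed

lemma isCont_reflected_neg_pole_series:
  assumes "-x \<notin> range \<rho>h"
  shows "isCont (\<lambda>x. pole_series ah \<rho>h (-x)) x"
proof -
  have "isCont (pole_series ah \<rho>h) (-x)"
    using assms by (intro neg.isCont_pole_series) (metis rangeI)
  then show ?thesis
    by (rule isCont_o2[OF isCont_minus[OF continuous_ident]])
qed

lemma isCont_laplace_exponent_real:
  assumes "x \<notin> range \<rho>" "-x \<notin> range \<rho>h"
  shows "isCont (\<phi> \<sigma> \<mu>) x"
proof -
  have "isCont (pole_series a \<rho>) x"
    using assms(1) by (intro pos.isCont_pole_series) auto
  with isCont_reflected_neg_pole_series[OF assms(2)] show ?thesis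
    unfolding laplace_exponent_real_def[abs_def] by (intro continuous_intros)
qed

lemma laplace_exponent_real_at_pole:
  assumes "\<And>k. \<rho> k = \<rho> m \<Longrightarrow> k = m" "0 < a m"
  shows "filterlim (\<phi> \<sigma> \<mu>) at_top (at_left (\<rho> m))"
    and "filterlim (\<phi> \<sigma> \<mu>) at_bot (at_right (\<rho> m))"
proof -
  obtain g where g: "isCont g (\<rho> m)"
    "\<And>x. pole_series a \<rho> x = g x + a m / \<rho> m * inverse (\<rho> m - x)"
    using pos.pole_series_sub_isolated_pole[OF assms(1)] by blast
  define h where "h x = \<sigma>^2 / 2 * x^2 + \<mu> * x + x^2 * g x + x^2 * pole_series ah \<rho>h (-x)" for x
  have split: "\<phi> \<sigma> \<mu> x
      = h x + x^2 * (a m / \<rho> m) * inverse (\<rho> m - x)" for x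
    unfolding laplace_exponent_real_def h_def g(2) by (simp add: algebra_simps)
  have "- \<rho> m \<notin> range \<rho>h"
    using pos.pole_pos[of m] by (intro minus_nonneg_not_neg_pole) simp
  with g(1) have "isCont h (\<rho> m)"
    unfolding h_def[abs_def] by (intro continuous_intros isCont_reflected_neg_pole_series)
  then have h_lim: "(h \<longlongrightarrow> h (\<rho> m)) (at (\<rho> m) within S)" for S
    using continuous_at_imp_continuous_within[OF \<open>isCont h (\<rho> m)\<close>]
    by (simp add: continuous_within)
  have weight_lim:
    "((\<lambda>x. x^2 * (a m / \<rho> m)) \<longlongrightarrow> (\<rho> m)^2 * (a m / \<rho> m)) (at (\<rho> m) within S)" for S
    by (intro tendsto_intros)
  have weight_pos: "0 < (\<rho> m)^2 * (a m / \<rho> m)"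
    using pos.pole_pos[of m] assms(2) by simp
  have pole_lim: "((\<lambda>x. \<rho> m - x) \<longlongrightarrow> 0) (at (\<rho> m) within S)" for S
    by (intro tendsto_eq_intros) auto
  have "filterlim (\<lambda>x. inverse (\<rho> m - x)) at_top (at_left (\<rho> m))"
    by (rule filterlim_inverse_at_top[OF pole_lim]) (simp add: eventually_at_filter)
  then have "filterlim (\<lambda>x. x^2 * (a m / \<rho> m) * inverse (\<rho> m - x)) at_top (at_left (\<rho> m))"
    by (rule filterlim_tendsto_pos_mult_at_top[OF weight_lim weight_pos])
  then show "filterlim (\<phi> \<sigma> \<mu>) at_top (at_left (\<rho> m))"
    unfolding split[abs_def] by (rule filterlim_tendsto_add_at_top[OF h_lim])
  have "filterlim (\<lambda>x. inverse (\<rho> m - x)) at_bot (at_right (\<rho> m))"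
    by (rule filterlim_inverse_at_bot[OF pole_lim]) (simp add: eventually_at_filter)
  then have "filterlim (\<lambda>x. x^2 * (a m / \<rho> m) * inverse (\<rho> m - x)) at_bot (at_right (\<rho> m))"
    by (rule filterlim_tendsto_pos_mult_at_bot[OF weight_lim weight_pos])
  then show "filterlim (\<phi> \<sigma> \<mu>) at_bot (at_right (\<rho> m))"
    unfolding split[abs_def] filterlim_tendsto_add_at_bot_iff[OF h_lim] .
qed

lemma laplace_exponent_real_div_less:
  assumes "0 < q" "0 < x" "x < y" "\<And>k. 0 < (\<rho> k - x) * (\<rho> k - y)"
  shows "(\<phi> \<sigma> \<mu> x - q) / x
    < (\<phi> \<sigma> \<mu> y - q) / y"
proof -
  have sums: "(\<lambda>k. t * (c k / (r k * (r k - s)))) sums (t * pole_series c r s)"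
    if "pole_data c r" for c r s t
    by (intro sums_mult pole_data.pole_series_sums[OF that])
  have div: "(\<phi> \<sigma> \<mu> t - q) / t = \<sigma>^2 / 2 * t + \<mu> + t * pole_series a \<rho> t
      + t * pole_series ah \<rho>h (-t) - q / t" if "0 < t" for t
    using that by (simp add: laplace_exponent_real_def field_simps power2_eq_square)
  have "x * pole_series a \<rho> x \<le> y * pole_series a \<rho> y"
  proof (rule sums_le[OF _ sums[OF pos.pole_data_axioms] sums[OF pos.pole_data_axioms]])
    fix k
    show "x * (a k / (\<rho> k * (\<rho> k - x))) \<le> y * (a k / (\<rho> k * (\<rho> k - y)))"
      using pos.pole_pos[of k] by (intro mult_pole_term_mono pos.weight_nonneg assms(3,4)) simp
  qed
  moreover have "x * pole_series ah \<rho>h (-x) \<le> y * pole_series ah \<rho>h (-y)"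
  proof (rule sums_le[OF _ sums[OF neg.pole_data_axioms] sums[OF neg.pole_data_axioms]])
    fix k
    have "0 < (- \<rho>h k - x) * (- \<rho>h k - y)"
      using neg.pole_pos[of k] assms(2,3) mult_pos_pos[of "\<rho>h k + x" "\<rho>h k + y"]
      by (simp add: algebra_simps)
    from mult_pole_term_mono[OF neg.weight_nonneg _ assms(3) this] neg.pole_pos[of k]
    show "x * (ah k / (\<rho>h k * (\<rho>h k - - x))) \<le> y * (ah k / (\<rho>h k * (\<rho>h k - - y)))"
      by (simp add: algebra_simps)
  qed
  moreover have "\<sigma>^2 / 2 * x \<le> \<sigma>^2 / 2 * y" "- q / x < - q / y"
    using assms(1-3) by (auto simp: mult_left_mono divide_simps)
  ultimately show ?thesis
    using assms(2,3) by (simp add: div)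
qed

lemma laplace_exponent_solutions_real:
  assumes "0 < q"
  shows "{z. z \<notin> laplace_poles \<rho> \<rho>h \<and> laplace_exponent \<sigma> \<mu> a \<rho> ah \<rho>h z = of_real q}
    = of_real ` {x. x \<notin> range \<rho> \<and> -x \<notin> range \<rho>h \<and> \<phi> \<sigma> \<mu> x = q}"
    (is "?Z = of_real ` ?R")
proof (intro set_eqI iffI)
  fix z
  assume z: "z \<in> ?Z"
  then have "Im z = 0"
    using laplace_exponent_eq_pos_imp_real[OF assms, of \<sigma> \<mu> z] by simp
  then have "z = of_real (Re z)"
    by (intro complex_eqI) simp_all
  then obtain t :: real where t: "z = of_real t"
    by blast
  with z have "t \<in> ?R"
    by (simp add: of_real_in_laplace_poles_iff laplace_exponent_of_real)
  with t show "z \<in> of_real ` ?R"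
    by (rule image_eqI)
next
  fix z :: complex
  assume "z \<in> of_real ` ?R"
  then obtain x where "z = of_real x" "x \<in> ?R"
    by blast
  then show "z \<in> ?Z"
    by (simp add: of_real_in_laplace_poles_iff laplace_exponent_of_real)
qed

lemma laplace_exponent_real_solutions_by_sign:
  assumes "q \<noteq> 0"
  shows "{x. x \<notin> range \<rho> \<and> -x \<notin> range \<rho>h \<and> \<phi> \<sigma> \<mu> x = q}
    = {x. 0 < x \<and> x \<notin> range \<rho> \<and> \<phi> \<sigma> \<mu> x = q}
      \<union> uminus ` {x. 0 < x \<and> x \<notin> range \<rho>h \<and> laplace_exponent_real \<sigma> (-\<mu>) ah \<rho>h a \<rho> x = q}"
    (is "?R = ?P \<union> uminus ` ?N")
proof (intro set_eqI iffI)
  fix x :: real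
  assume x: "x \<in> ?R"
  then have "x \<noteq> 0"
    using assms by auto
  then consider "0 < x" | "0 < -x"
    by linarith
  then show "x \<in> ?P \<union> uminus ` ?N"
  proof cases
    case 1
    with x show ?thesis
      by simp
  next
    case 2
    with x have "-x \<in> ?N"
      using laplace_exponent_real_minus[of \<sigma> "-\<mu>" ah \<rho>h a \<rho> x] by simp
    then have "x \<in> uminus ` ?N"
      by (rule rev_image_eqI) simp
    then show ?thesis
      by (rule UnI2)
  qed
next
  fix x :: real
  assume "x \<in> ?P \<union> uminus ` ?N"
  moreover have "-y \<notin> range \<rho>h" "-y \<notin> range \<rho>" if "0 < y" for y
    using that two_sided_poles.minus_nonneg_not_neg_pole[OF two_sided_poles_mirror, of y]
      minus_nonneg_not_neg_pole[of y] by simp_all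
  ultimately show "x \<in> ?R"
    by (auto simp: laplace_exponent_real_minus)
qed

end

text \<open>With the 0-based indexing of \<open>Defs\<close>, the gaps \<open>(gap_start \<rho> n, \<rho> n)\<close> are the paper's
  \<open>(0, \<rho>\<^sub>1)\<close>, \<open>(\<rho>\<^sub>1, \<rho>\<^sub>2)\<close>, \<open>\<dots>\<close>\<close>

definition gap_start :: "(nat \<Rightarrow> real) \<Rightarrow> nat \<Rightarrow> real" where
  "gap_start \<rho> n = (case n of 0 \<Rightarrow> 0 | Suc m \<Rightarrow> \<rho> m)"

lemma gap_start_simps [simp]: "gap_start \<rho> 0 = 0" "gap_start \<rho> (Suc n) = \<rho> n"
  by (simp_all add: gap_start_def)

locale ordered_two_sided_poles = two_sided_poles +
  assumes weights_pos: "\<And>k. 0 < a k"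
    and poles_strict_mono: "strict_mono \<rho>"
begin

lemma gap_start_nonneg: "0 \<le> gap_start \<rho> n"
  using pos.pole_pos by (cases n) (auto intro: less_imp_le)

lemma pole_le_gap_start: "k < n \<Longrightarrow> \<rho> k \<le> gap_start \<rho> n"
  by (cases n) (auto simp: strict_mono_less_eq[OF poles_strict_mono])

lemma gap_start_less: "gap_start \<rho> n < \<rho> n"
  using pos.pole_pos by (cases n) (auto simp: strict_mono_less[OF poles_strict_mono])

lemma pole_not_in_gap:
  assumes "gap_start \<rho> n < x" "x < \<rho> n"
  shows "x \<notin> range \<rho>"
proof
  assume "x \<in> range \<rho>"
  then obtain k where "x = \<rho> k"
    by blast
  then show False
    using assms pole_le_gap_start[of k n] strict_mono_less_eq[OF poles_strict_mono, of n k]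
    by (cases "k < n") auto
qed

lemma poles_same_side_of_gap:
  assumes "gap_start \<rho> n < x" "x < \<rho> n" "gap_start \<rho> n < y" "y < \<rho> n"
  shows "0 < (\<rho> k - x) * (\<rho> k - y)"
proof (cases "k < n")
  case True
  with assms pole_le_gap_start[of k n] show ?thesis
    by (intro mult_neg_neg) auto
next
  case False
  with assms strict_mono_less_eq[OF poles_strict_mono, of n k] show ?thesis
    by (intro mult_pos_pos) auto
qed

lemma in_some_gap:
  assumes "0 < x" "x \<notin> range \<rho>"
  shows "\<exists>n. gap_start \<rho> n < x \<and> x < \<rho> n"
proof -
  obtain N where "\<forall>k\<ge>N. x + 1 \<le> \<rho> k"
    using pos.poles_eventually_ge by blast
  then have "\<exists>k. x < \<rho> k"
    by (meson le_refl less_add_one order_less_le_trans)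
  define n where "n = (LEAST k. x < \<rho> k)"
  have "x < \<rho> n"
    unfolding n_def by (rule LeastI_ex) fact
  moreover have "gap_start \<rho> n < x"
  proof (cases n)
    case (Suc m)
    then have "\<not> x < \<rho> m"
      using not_less_Least[of m "\<lambda>k. x < \<rho> k"] by (simp add: n_def)
    with assms(2) Suc show ?thesis
      by (metis gap_start_simps(2) linorder_neqE_linordered_idom rangeI)
  qed (use assms in simp)
  ultimately show ?thesis
    by blast
qed

lemma root_in_gap:
  assumes "0 < q"
  shows "\<exists>x. gap_start \<rho> n < x \<and> x < \<rho> n \<and> \<phi> \<sigma> \<mu> x = q"
proof (rule IVT_open_interval[OF gap_start_less])
  have isolated: "\<rho> k = \<rho> m \<Longrightarrow> k = m" for k m
    using strict_mono_eq[OF poles_strict_mono] by blast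
  have "isCont (\<phi> \<sigma> \<mu>) x" if "gap_start \<rho> n < x" "x < \<rho> n" for x
  proof (rule isCont_laplace_exponent_real)
    show "x \<notin> range \<rho>"
      using pole_not_in_gap[OF that] .
    show "-x \<notin> range \<rho>h"
      using that gap_start_nonneg[of n] by (intro minus_nonneg_not_neg_pole) simp
  qed
  then show "continuous_on {gap_start \<rho> n<..<\<rho> n} (\<phi> \<sigma> \<mu>)"
    by (intro continuous_at_imp_continuous_on) auto
  show "eventually (\<lambda>x. q < \<phi> \<sigma> \<mu> x) (at_left (\<rho> n))"
    using laplace_exponent_real_at_pole(1)[OF isolated weights_pos] by (simp add: filterlim_at_top_dense)
  show "eventually (\<lambda>x. \<phi> \<sigma> \<mu> x < q) (at_right (gap_start \<rho> n))"
  proof (cases n)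
    case 0
    have "isCont (\<phi> \<sigma> \<mu>) 0"
      using minus_nonneg_not_neg_pole[of 0]
        two_sided_poles.minus_nonneg_not_neg_pole[OF two_sided_poles_mirror, of 0]
      by (intro isCont_laplace_exponent_real) simp_all
    then have "(\<phi> \<sigma> \<mu> \<longlongrightarrow> 0) (at_right 0)"
      using continuous_at_imp_continuous_within[of 0 "\<phi> \<sigma> \<mu>" "{0<..}"]
      by (simp add: continuous_within)
    with 0 assms show ?thesis
      by (simp add: order_tendstoD(2))
  next
    case (Suc m)
    then show ?thesis
      using laplace_exponent_real_at_pole(2)[OF isolated weights_pos] by (simp add: filterlim_at_bot_dense)
  qed
qed

lemma root_in_gap_unique:
  assumes "0 < q" "gap_start \<rho> n < x" "x < \<rho> n" "gap_start \<rho> n < y" "y < \<rho> n"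
    and "\<phi> \<sigma> \<mu> x = q" "\<phi> \<sigma> \<mu> y = q"
  shows "x = y"
proof -
  have False if "gap_start \<rho> n < u" "u < v" "v < \<rho> n"
    "\<phi> \<sigma> \<mu> u = q" "\<phi> \<sigma> \<mu> v = q" for u v
    using laplace_exponent_real_div_less[OF assms(1), of u v \<sigma> \<mu>] gap_start_nonneg[of n]
      poles_same_side_of_gap[of n u v] that by simp
  then show ?thesis
    using assms by (metis linorder_neqE_linordered_idom)
qed

lemma positive_roots_interlace:
  assumes "0 < q"
  obtains \<zeta> where "\<forall>n. 0 < \<zeta> n \<and> \<zeta> n < \<rho> n \<and> \<rho> n < \<zeta> (Suc n)"
    and "{x. 0 < x \<and> x \<notin> range \<rho> \<and> \<phi> \<sigma> \<mu> x = q} = range \<zeta>"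
proof -
  have "\<forall>n. \<exists>x. gap_start \<rho> n < x \<and> x < \<rho> n \<and> \<phi> \<sigma> \<mu> x = q"
    using root_in_gap[OF assms] by blast
  then obtain \<zeta> where \<zeta>: "\<And>n. gap_start \<rho> n < \<zeta> n \<and> \<zeta> n < \<rho> n \<and> \<phi> \<sigma> \<mu> (\<zeta> n) = q"
    by metis
  show thesis
  proof
    show "\<forall>n. 0 < \<zeta> n \<and> \<zeta> n < \<rho> n \<and> \<rho> n < \<zeta> (Suc n)"
    proof
      fix n
      show "0 < \<zeta> n \<and> \<zeta> n < \<rho> n \<and> \<rho> n < \<zeta> (Suc n)"
        using \<zeta>[of n] \<zeta>[of "Suc n"] gap_start_nonneg[of n] by auto
    qed
    show "{x. 0 < x \<and> x \<notin> range \<rho> \<and> \<phi> \<sigma> \<mu> x = q} = range \<zeta>"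
    proof (intro set_eqI iffI)
      fix x
      assume "x \<in> {x. 0 < x \<and> x \<notin> range \<rho> \<and> \<phi> \<sigma> \<mu> x = q}"
      then obtain n where "gap_start \<rho> n < x" "x < \<rho> n" "\<phi> \<sigma> \<mu> x = q"
        using in_some_gap by blast
      then have "x = \<zeta> n"
        using root_in_gap_unique[OF assms] \<zeta>[of n] by blast
      then show "x \<in> range \<zeta>"
        by simp
    next
      fix x
      assume "x \<in> range \<zeta>"
      then obtain n where "x = \<zeta> n"
        by blast
      then show "x \<in> {x. 0 < x \<and> x \<notin> range \<rho> \<and> \<phi> \<sigma> \<mu> x = q}"
        using \<zeta>[of n] pole_not_in_gap[of n "\<zeta> n"] gap_start_nonneg[of n] by auto
    qed
  qed
qed

end

theorem proposition3:
  fixes a \<rho> ah \<rho>h :: "nat \<Rightarrow> real" and \<mu> \<sigma> q :: real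
  assumes a_pos: "\<And>n. a n > 0" and rho_pos: "\<And>n. \<rho> n > 0"
      and ah_pos: "\<And>n. ah n > 0" and rhoh_pos: "\<And>n. \<rho>h n > 0"
      and rho_mono: "strict_mono \<rho>" and rhoh_mono: "strict_mono \<rho>h"
      and rho_lim: "filterlim \<rho> at_top sequentially"
      and rhoh_lim: "filterlim \<rho>h at_top sequentially"
      and sum_a: "summable (\<lambda>n. a n / (\<rho> n)^2)"
      and sum_ah: "summable (\<lambda>n. ah n / (\<rho>h n)^2)"
      and sigma: "\<sigma> \<ge> 0"
      and q: "q > 0"
  shows "\<exists>\<zeta> \<zeta>h :: nat \<Rightarrow> real.
           (\<forall>n. 0 < \<zeta> n \<and> \<zeta> n < \<rho> n \<and> \<rho> n < \<zeta> (Suc n)) \<and>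
           (\<forall>n. 0 < \<zeta>h n \<and> \<zeta>h n < \<rho>h n \<and> \<rho>h n < \<zeta>h (Suc n)) \<and>
           {z. z \<notin> laplace_poles \<rho> \<rho>h \<and> laplace_exponent \<sigma> \<mu> a \<rho> ah \<rho>h z = complex_of_real q}
             = range (\<lambda>n. complex_of_real (\<zeta> n)) \<union> range (\<lambda>n. - complex_of_real (\<zeta>h n))"
proof -
  interpret two_sided_poles a \<rho> ah \<rho>h
    by unfold_locales (use a_pos rho_pos ah_pos rhoh_pos rho_lim rhoh_lim sum_a sum_ah in
      \<open>auto intro: less_imp_le\<close>)
  interpret right: ordered_two_sided_poles a \<rho> ah \<rho>h
    by unfold_locales (fact a_pos rho_mono)+
  interpret left: ordered_two_sided_poles ah \<rho>h a \<rho>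
    by (intro ordered_two_sided_poles.intro two_sided_poles_mirror ordered_two_sided_poles_axioms.intro
        ah_pos rhoh_mono)
  obtain \<zeta> where \<zeta>: "\<forall>n. 0 < \<zeta> n \<and> \<zeta> n < \<rho> n \<and> \<rho> n < \<zeta> (Suc n)"
    and roots: "{x. 0 < x \<and> x \<notin> range \<rho> \<and> laplace_exponent_real \<sigma> \<mu> a \<rho> ah \<rho>h x = q} = range \<zeta>"
    using right.positive_roots_interlace[OF q] by blast
  obtain \<zeta>h where \<zeta>h: "\<forall>n. 0 < \<zeta>h n \<and> \<zeta>h n < \<rho>h n \<and> \<rho>h n < \<zeta>h (Suc n)"
    and roots_h: "{x. 0 < x \<and> x \<notin> range \<rho>h \<and> laplace_exponent_real \<sigma> (-\<mu>) ah \<rho>h a \<rho> x = q} = range \<zeta>h"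
    using left.positive_roots_interlace[OF q] by blast
  have "{z. z \<notin> laplace_poles \<rho> \<rho>h \<and> laplace_exponent \<sigma> \<mu> a \<rho> ah \<rho>h z = complex_of_real q}
      = of_real ` (range \<zeta> \<union> uminus ` range \<zeta>h)"
    unfolding laplace_exponent_solutions_real[OF q] laplace_exponent_real_solutions_by_sign[OF q[THEN less_imp_neq, symmetric]]
      roots roots_h ..
  also have "\<dots> = range (\<lambda>n. complex_of_real (\<zeta> n)) \<union> range (\<lambda>n. - complex_of_real (\<zeta>h n))"
    by (simp add: image_Un image_image)
  finally show ?thesis
    by (intro exI[of _ \<zeta>] exI[of _ \<zeta>h] conjI \<zeta> \<zeta>h)
qed

end
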